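(* Let $\mathcal{A}$ be a monotone allocation rule for a combinatorial auction problem, let $\mathbf{t}$ be the true type profile, and let $(A_1,\dots,A_n)$ be a feasible allocation maximizing $\sum_i t_i(A_i)$. Let $D=(\mathbf{d}^1,\dots,\mathbf{d}^T)$ be a sequence of profiles of single-minded declarations submitted to the mechanism $\mathcal{M}_{\mathcal{A}}$. If agent $i$ minimizes external regret in $D$, then $$\frac1T\sum_{t=1}^T\Big(t_i(\mathcal{A}_i(\mathbf{d}^t))+\theta_i^{\mathcal{A}}(A_i,\mathbf{d}^t_{-i})\Big)\ \ge\ t_i(A_i)-o(1),$$ where $o(1)\to 0$ as $T\to\infty$.
   Context: There is a set $M$ of $m$ items and $n$ agents; the problem specifies which allocation profiles $(X_1,\dots,X_n)$ are feasible. Agent $i$ has a private monotone valuation $t_i:2^M\to\mathbb{R}_{\ge0}$ with $t_i(\emptyset)=0$. A single-minded declaration $(S,x)$ assigns value $x$ to supersets of $S$ and $0$ otherwise. An allocation rule $\mathcal{A}$ maps declaration profiles to feasible allocations, $\mathcal{A}_i(\mathbf{d})$ being agent $i$'s set. Monotone: if agent $i$ wins $S$ by declaring value $v$ for it, he also wins any subset of $S$ declared at any value at least $v$. Critical price: $\theta_i^{\mathcal{A}}(S,\mathbf{d}_{-i})=\inf\{v:\exists d_i,\ d_i(S)=v,\ \mathcal{A}_i(d_i,\mathbf{d}_{-i})=S\}$. Mechanism $\mathcal{M}_{\mathcal{A}}$: replace each declaration $d_i$ by $(S_i,d_i(S_i))$ with $S_i\in\arg\max_S d_i(S)$ (ties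 to smaller sets), run $\mathcal{A}$, and charge each winner the critical price of his set (losers pay $0$). Utility $u_i(\mathbf{d})$ = true value of received set minus payment. Agent $i$ minimizes external regret in $D$ if for every fixed declaration $d$, $\sum_t u_i(d_i^t,\mathbf{d}_{-i}^t)\ge \sum_t u_i(d,\mathbf{d}^t_{-i})-o(T)$. *)

theory Defs
  imports "HOL-Analysis.Analysis"
begin

text \<open>Items form the finite type 'i (so M = UNIV), agents the finite type 'a.
  A single-minded declaration is a pair (S, x); as a valuation it is smv S x.\<close>

definition smv :: "'i set \<Rightarrow> real \<Rightarrow> 'i set \<Rightarrow> real" where
  "smv S x = (\<lambda>T. if S \<subseteq> T then x else 0)"

definition valuation :: "('i set \<Rightarrow> real) \<Rightarrow> bool" where
  "valuation v \<longleftrightarrow> v {} = 0 \<and> (\<forall>S T. S \<subseteq> T \<longrightarrow> v S \<le> v T) \<and> (\<forall>S. 0 \<le> v S)"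

definition nonneg_profile :: "('a \<Rightarrow> 'i set \<times> real) \<Rightarrow> bool" where
  "nonneg_profile b \<longleftrightarrow> (\<forall>j. 0 \<le> snd (b j))"

definition monotone_rule :: "(('a \<Rightarrow> 'i set \<times> real) \<Rightarrow> 'a \<Rightarrow> 'i set) \<Rightarrow> bool" where
  "monotone_rule A \<longleftrightarrow>
     (\<forall>b i T y. nonneg_profile b \<longrightarrow> T \<subseteq> A b i \<longrightarrow>
        smv (fst (b i)) (snd (b i)) (A b i) \<le> y \<longrightarrow> A (b(i := (T, y))) i = T)"

text \<open>Critical price (in ereal, so that the infimum of the empty set is +\<infinity>).\<close>
definition crit :: "(('a \<Rightarrow> 'i set \<times> real) \<Rightarrow> 'a \<Rightarrow> 'i set) \<Rightarrow> 'a \<Rightarrow> 'i set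
                      \<Rightarrow> ('a \<Rightarrow> 'i set \<times> real) \<Rightarrow> ereal" where
  "crit A i S b = Inf {ereal (smv S' x S) | S' x. 0 \<le> x \<and> A (b(i := (S', x))) i = S}"

definition tie_rule :: "(('i::finite set \<Rightarrow> real) \<Rightarrow> 'i set) \<Rightarrow> bool" where
  "tie_rule sel \<longleftrightarrow> (\<forall>d. (\<forall>T. d T \<le> d (sel d)) \<and>
                        (\<forall>T. d T = d (sel d) \<longrightarrow> card (sel d) \<le> card T))"

definition reduce :: "(('i set \<Rightarrow> real) \<Rightarrow> 'i set) \<Rightarrow> ('a \<Rightarrow> 'i set \<Rightarrow> real)
                        \<Rightarrow> 'a \<Rightarrow> 'i set \<times> real" where
  "reduce sel d = (\<lambda>j. (sel (d j), d j (sel (d j))))"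

definition payment :: "(('a \<Rightarrow> 'i set \<times> real) \<Rightarrow> 'a \<Rightarrow> 'i set) \<Rightarrow> 'a
                         \<Rightarrow> ('a \<Rightarrow> 'i set \<times> real) \<Rightarrow> real" where
  "payment A i b = (if A b i = {} then 0 else real_of_ereal (crit A i (A b i) b))"

definition utility :: "(('a \<Rightarrow> 'i set \<times> real) \<Rightarrow> 'a \<Rightarrow> 'i set) \<Rightarrow> (('i set \<Rightarrow> real) \<Rightarrow> 'i set)
                        \<Rightarrow> ('a \<Rightarrow> 'i set \<Rightarrow> real) \<Rightarrow> 'a \<Rightarrow> ('a \<Rightarrow> 'i set \<Rightarrow> real) \<Rightarrow> real" where
  "utility A sel tv i d = (let b = reduce sel d in tv i (A b i) - payment A i b)"

end

theory Submission imports Defs begin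

text \<open>Fix the set S = A_i that agent i receives in the optimum and consider the deviation
  to the single-minded declaration (S, t_i(S)). In every round this deviation yields
  utility at least t_i(S) - \<theta>_i(S, d_{-i}): either the critical price is at least t_i(S)
  and truthful-for-S bidding has nonnegative utility, or it is below t_i(S), so by
  monotonicity the agent wins S at price \<theta>_i(S, d_{-i}). No regret against this deviation,
  together with utility \<le> value, gives the bound after averaging over the rounds.\<close>

lemma crit_fun_upd_self: "crit A i S (b(i := z)) = crit A i S b"
  by (simp add: crit_def)

lemma crit_nonneg: "0 \<le> crit A i S b"
  unfolding crit_def by (rule Inf_greatest) (auto simp: smv_def)

lemma crit_le_declared_value:
  assumes "0 \<le> snd (b i)"
  shows "crit A i (A b i) b \<le> ereal (smv (fst (b i)) (snd (b i)) (A b i))"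
proof -
  have "b(i := (fst (b i), snd (b i))) = b" by simp
  then show ?thesis
    unfolding crit_def by (intro Inf_lower) (use assms in force)
qed

lemma payment_nonneg: "0 \<le> payment A i b"
  using crit_nonneg[of A i "A b i" b]
  unfolding payment_def by (cases "crit A i (A b i) b") auto

lemma payment_le_value:
  assumes "0 \<le> snd (b i)"
    and "smv (fst (b i)) (snd (b i)) (A b i) \<le> v"
  shows "payment A i b \<le> v"
proof -
  have le: "crit A i (A b i) b \<le> ereal v"
    using crit_le_declared_value[of b i A, OF assms(1)] assms(2) by (meson ereal_less_eq(3) order_trans)
  then show ?thesis
    using crit_nonneg[of A i "A b i" b] assms
    unfolding payment_def by (cases "crit A i (A b i) b") (auto simp: smv_def)
qed

lemma wins_above_crit:
  assumes "monotone_rule A" and "nonneg_profile b" and "crit A i S b < ereal v"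
  shows "A (b(i := (S, v))) i = S"
proof -
  obtain S' x where x: "0 \<le> x" and win: "A (b(i := (S', x))) i = S" and lt: "smv S' x S < v"
    using assms(3) unfolding crit_def by (auto simp: Inf_less_iff)
  have "nonneg_profile (b(i := (S', x)))"
    using assms(2) x by (simp add: nonneg_profile_def)
  then show ?thesis
    using assms(1) win lt unfolding monotone_rule_def
    by (metis (no_types, lifting) fun_upd_same fun_upd_upd fst_conv less_eq_real_def snd_conv subset_refl)
qed

lemma tie_rule_smv:
  assumes "tie_rule sel" and "0 < v"
  shows "sel (smv (S :: 'i::finite set) v) = S"
proof -
  let ?d = "smv S v"
  have "?d S \<le> ?d (sel ?d)" using assms(1) by (simp add: tie_rule_def)
  then have sub: "S \<subseteq> sel ?d" using assms(2) by (auto simp: smv_def split: if_splits)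
  then have "?d (sel ?d) = ?d S" by (simp add: smv_def)
  then have "card (sel ?d) \<le> card S" using assms(1) unfolding tie_rule_def by metis
  then show ?thesis using sub by (metis card_seteq finite)
qed

lemma valuation_smv: "valuation v \<Longrightarrow> valuation (smv S (v S))"
  by (auto simp: valuation_def smv_def)

lemma nonneg_profile_reduce:
  assumes "\<forall>j. \<exists>S x. 0 \<le> x \<and> d j = smv S x"
  shows "nonneg_profile (reduce sel d)"
proof -
  have "0 \<le> d j T" for j T using assms by (metis order_refl smv_def)
  then show ?thesis by (simp add: nonneg_profile_def reduce_def)
qed

lemma utility_le_value: "utility A sel tv i d \<le> tv i (A (reduce sel d) i)"
  using payment_nonneg by (simp add: utility_def Let_def)

lemma utility_single_minded_deviation:
  fixes d :: "'a \<Rightarrow> 'i::finite set \<Rightarrow> real"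
  assumes mono: "monotone_rule A" and ties: "tie_rule sel" and val: "valuation (tv i)"
    and nn: "nonneg_profile (reduce sel d)"
  shows "ereal (tv i S) \<le> ereal (utility A sel tv i (d(i := smv S (tv i S)))) + crit A i S (reduce sel d)"
proof -
  let ?b = "reduce sel d" and ?v = "tv i S"
  let ?b' = "reduce sel (d(i := smv S ?v))"
  have b': "?b' = ?b(i := (sel (smv S ?v), smv S ?v (sel (smv S ?v))))"
    by (auto simp: reduce_def)
  have v0: "\<And>W. 0 \<le> tv i W" and vmono: "\<And>X Y. X \<subseteq> Y \<Longrightarrow> tv i X \<le> tv i Y"
    using val by (auto simp: valuation_def)
  show ?thesis
  proof (cases "crit A i S ?b < ereal ?v")
    case False
    have "payment A i ?b' \<le> tv i (A ?b' i)"
      unfolding b' using v0 vmono by (intro payment_le_value) (auto simp: smv_def)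
    then have "0 \<le> ereal (utility A sel tv i (d(i := smv S ?v)))"
      by (simp add: utility_def Let_def)
    then show ?thesis using False by (simp add: add_increasing)
  next
    case True
    have "0 < ereal ?v" using crit_nonneg True by (rule le_less_trans)
    then have v: "0 < ?v" by simp
    then have "S \<noteq> {}" using val by (auto simp: valuation_def)
    have "?b' = ?b(i := (S, ?v))"
      using b' tie_rule_smv[OF ties v] by (simp add: smv_def)
    then have win: "A ?b' i = S" and crit: "crit A i S ?b' = crit A i S ?b"
      using wins_above_crit[OF mono nn True] by (simp_all add: crit_fun_upd_self)
    obtain c where c: "crit A i S ?b = ereal c"
      using crit_nonneg[of A i S ?b] True by (cases "crit A i S ?b") auto
    have "payment A i ?b' = c" using win \<open>S \<noteq> {}\<close> crit c by (simp add: payment_def)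
    then show ?thesis using win c by (simp add: utility_def Let_def)
  qed
qed

lemma average_bound_from_regret:
  fixes \<theta> :: "nat \<Rightarrow> ereal"
  assumes dev: "\<And>\<tau>. ereal c \<le> ereal (u' \<tau>) + \<theta> \<tau>"
    and u_le: "\<And>\<tau>. u \<tau> \<le> a \<tau>"
    and \<theta>_nonneg: "\<And>\<tau>. 0 \<le> \<theta> \<tau>"
    and regret: "(\<Sum>\<tau><T. u' \<tau>) - r \<le> (\<Sum>\<tau><T. u \<tau>)"
    and "0 < T"
  shows "ereal (c - r / real T) \<le> ereal (1 / real T) * (\<Sum>\<tau><T. ereal (a \<tau>) + \<theta> \<tau>)"
proof -
  define \<Theta> where "\<Theta> = (\<Sum>\<tau><T. \<theta> \<tau>)"
  have "ereal (real T * c) = (\<Sum>\<tau><T. ereal c)" by simp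
  also have "\<dots> \<le> (\<Sum>\<tau><T. ereal (u' \<tau>) + \<theta> \<tau>)" by (rule sum_mono) (rule dev)
  also have "\<dots> = ereal (\<Sum>\<tau><T. u' \<tau>) + \<Theta>" by (simp add: \<Theta>_def sum.distrib)
  finally have dev_sum: "ereal (real T * c) \<le> ereal (\<Sum>\<tau><T. u' \<tau>) + \<Theta>" .
  have "0 \<le> \<Theta>" unfolding \<Theta>_def by (rule sum_nonneg) (rule \<theta>_nonneg)
  then have "ereal (real T * c - r) \<le> ereal (\<Sum>\<tau><T. u \<tau>) + \<Theta>"
    using dev_sum regret by (cases \<Theta>) auto
  also have "\<dots> = (\<Sum>\<tau><T. ereal (u \<tau>) + \<theta> \<tau>)" by (simp add: \<Theta>_def sum.distrib)
  also have "\<dots> \<le> (\<Sum>\<tau><T. ereal (a \<tau>) + \<theta> \<tau>)"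
    by (rule sum_mono) (use u_le in \<open>simp add: add_right_mono\<close>)
  finally have "ereal (1 / real T) * ereal (real T * c - r)
      \<le> ereal (1 / real T) * (\<Sum>\<tau><T. ereal (a \<tau>) + \<theta> \<tau>)"
    by (rule ereal_mult_left_mono) simp
  moreover have "ereal (1 / real T) * ereal (real T * c - r) = ereal (c - r / real T)"
    using \<open>0 < T\<close> by (simp add: field_simps)
  ultimately show ?thesis by simp
qed

theorem lemma3p2:
  fixes feasible :: "('a::finite \<Rightarrow> 'i::finite set) \<Rightarrow> bool"
    and A :: "('a \<Rightarrow> 'i set \<times> real) \<Rightarrow> 'a \<Rightarrow> 'i set"
    and sel :: "('i set \<Rightarrow> real) \<Rightarrow> 'i set"
    and tv :: "'a \<Rightarrow> 'i set \<Rightarrow> real"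
    and Aopt :: "'a \<Rightarrow> 'i set"
    and D :: "nat \<Rightarrow> 'a \<Rightarrow> 'i set \<Rightarrow> real"
    and i :: 'a
  assumes rule_feasible: "\<forall>b. nonneg_profile b \<longrightarrow> feasible (A b)"
    and mono: "monotone_rule A"
    and types: "\<forall>j. valuation (tv j)"
    and opt_feasible: "feasible Aopt"
    and opt_max: "\<forall>X. feasible X \<longrightarrow> (\<Sum>j\<in>UNIV. tv j (X j)) \<le> (\<Sum>j\<in>UNIV. tv j (Aopt j))"
    and single_minded: "\<forall>\<tau> j. \<exists>S x. 0 \<le> x \<and> D \<tau> j = smv S x"
    and ties: "tie_rule sel"
    and regret: "\<forall>d. valuation d \<longrightarrow>
       (\<exists>r :: nat \<Rightarrow> real. ((\<lambda>T. r T / real T) \<longlonglongrightarrow> 0) \<and>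
          (\<forall>T. (\<Sum>\<tau><T. utility A sel tv i (D \<tau>))
                 \<ge> (\<Sum>\<tau><T. utility A sel tv i ((D \<tau>)(i := d))) - r T))"
  shows "\<exists>f :: nat \<Rightarrow> real. (f \<longlonglongrightarrow> 0) \<and>
     (\<forall>T>0. ereal (1 / real T) *
        (\<Sum>\<tau><T. ereal (tv i (A (reduce sel (D \<tau>)) i)) + crit A i (Aopt i) (reduce sel (D \<tau>)))
        \<ge> ereal (tv i (Aopt i) - f T))"
proof -
  let ?dev = "smv (Aopt i) (tv i (Aopt i))"
  have "valuation ?dev" using types by (simp add: valuation_smv)
  then obtain r where r_lim: "(\<lambda>T. r T / real T) \<longlonglongrightarrow> 0"
    and r_bound: "\<And>T. (\<Sum>\<tau><T. utility A sel tv i ((D \<tau>)(i := ?dev))) - r T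
                        \<le> (\<Sum>\<tau><T. utility A sel tv i (D \<tau>))"
    using regret by blast
  have dev: "ereal (tv i (Aopt i)) \<le> ereal (utility A sel tv i ((D \<tau>)(i := ?dev)))
               + crit A i (Aopt i) (reduce sel (D \<tau>))" for \<tau>
    using single_minded types
    by (intro utility_single_minded_deviation[OF mono ties]) (auto intro: nonneg_profile_reduce)
  show ?thesis
    using average_bound_from_regret[OF dev utility_le_value crit_nonneg r_bound] r_lim by blast
qed

end
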